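(* Consider a fixed-wing UAV with constant speed $V_g>0$ and kinematics $$\dot x_p=V_g\cos\gamma\cos\chi,\ \dot y_p=V_g\cos\gamma\sin\chi,\ \dot z_p=V_g\sin\gamma,\quad \dot\chi=\frac{a_{yc}}{V_g\cos\gamma}+d_\chi,\ \dot\gamma=\frac{a_{zc}-g\cos\gamma}{V_g}+d_\gamma,$$ with disturbances satisfying $\sqrt{d_\chi^2+d_\gamma^2}\le L_d$, tracking a virtual target $(x_c,y_c,z_c)$. Let $k_q>0$, $0<\delta<\pi/2$, and apply the modified guidance law $$a_{yc}^*=(k_q\sin\eta^{lat}+f_{lat})V_g\cos\gamma,\qquad a_{zc}^*=(k_q\sin\eta^{lon}+f_{lon})V_g+g\cos\gamma,$$ with compensation terms $f_{lat}=\dot C_1-f_\chi$, $f_{lon}=\dot C_2-f_\gamma$, where $f_\chi,f_\gamma$ are such that for some $\tau>0$, at every state with $|\eta^{lat}|\le\delta$, $|\eta^{lon}|\le\delta$ and $(\sin\eta^{lat}\cos\eta^{lat},\sin\eta^{lon}\cos\eta^{lon})\ne(0,0)$, $$\frac{f_\chi\sin\eta^{lat}\cos\eta^{lat}+f_\gamma\sin\eta^{lon}\cos\eta^{lon}}{\sqrt{\sin^2\eta^{lat}\cos^2\eta^{lat}+\sin^2\eta^{lon}\cos^2\eta^{lon}}}+L_d+\tau\le0.$$ Then along closed-loop trajectories satisfying $|\eta^{lon}|\le\delta$ and $|\eta^{lat}|\le\delta$, the look-ahead angles $\eta^{lat},\eta^{lon}$ converge to zero in finite time, with settling time bounded by 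$$T\le\frac{1}{k_q\cos\delta}\ln\!\left(1+\frac{k_q}{\tau}\sqrt{\sin^2\eta^{lon}(0)+\sin^2\eta^{lat}(0)}\right).$$
   Context: $\chi$ is the track angle, $\gamma$ the flight-path angle (with $\cos\gamma\neq0$), $g$ gravitational acceleration, $a_{yc},a_{zc}$ lateral and longitudinal acceleration commands. The line-of-sight angles are $C_1=\tan^{-1}\frac{y_c-y_p}{x_c-x_p}$ and $C_2=\tan^{-1}\frac{z_c-z_p}{\sqrt{(x_c-x_p)^2+(y_c-y_p)^2}}$, and the look-ahead angles are $\eta^{lat}=C_1-\chi$, $\eta^{lon}=C_2-\gamma$; $\dot C_1,\dot C_2$ are their time derivatives along the trajectory. No saturation of the commands is imposed in this statement. *)

theory Defs
  imports "HOL-Analysis.Analysis"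
begin

definition los_lat :: "real \<Rightarrow> real \<Rightarrow> real \<Rightarrow> real \<Rightarrow> real" where
  "los_lat xc yc xp yp = arctan ((yc - yp) / (xc - xp))"

definition los_lon :: "real \<Rightarrow> real \<Rightarrow> real \<Rightarrow> real \<Rightarrow> real \<Rightarrow> real \<Rightarrow> real" where
  "los_lon xc yc zc xp yp zp =
     arctan ((zc - zp) / sqrt ((xc - xp)^2 + (yc - yp)^2))"

end

theory Submission
  imports Defs
begin

text \<open>
  Under the guidance law each look-ahead angle obeys eta' = -kq sin eta + f - d, so
  W = sin^2 eta_lat + sin^2 eta_lon has derivative 2 Sum sin eta cos eta (-kq sin eta + f - d).
  On |eta| \<le> \<delta> we have cos eta \<ge> cos \<delta>, and by Cauchy-Schwarz the condition on (f_chi, f_gamma)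
  absorbs the disturbance with margin \<tau>; hence W' \<le> -2 a W - 2 b sqrt W with a = kq cos \<delta> and
  b = \<tau> cos \<delta>. For V = sqrt W this reads V' \<le> -a V - b, which drives V to zero before
  ln (1 + a V(0) / b) / a; as W is nonincreasing it stays zero, and sin eta = 0 with |eta| < pi
  gives eta = 0. The position kinematics enter only through the assumed derivatives of the
  line-of-sight angles.
\<close>

lemma DERIV_within_nonpos_imp_decreasing:
  fixes f f' :: "real \<Rightarrow> real"
  assumes "s \<le> t" and "{s..t} \<subseteq> S"
    and deriv: "\<And>x. x \<in> {s..t} \<Longrightarrow> (f has_real_derivative f' x) (at x within S)"
    and nonpos: "\<And>x. x \<in> {s..t} \<Longrightarrow> f' x \<le> 0"
  shows "f t \<le> f s"
proof -
  have "(f has_derivative (\<lambda>h. f' x * h)) (at x within {s..t})" if "s \<le> x" "x \<le> t" for x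
    using deriv[of x] that assms(2)
    by (auto simp: has_field_derivative_def intro: has_derivative_subset)
  then obtain x where x: "x \<in> {s..t}" "f t - f s = f' x * (t - s)"
    using mvt_very_simple[OF \<open>s \<le> t\<close>, of f "\<lambda>x h. f' x * h"] by blast
  have "f' x * (t - s) \<le> 0"
    using nonpos[OF x(1)] \<open>s \<le> t\<close> by (simp add: mult_nonpos_nonneg)
  with x(2) show ?thesis
    by linarith
qed

lemma Cauchy_Schwarz_ineq_real_pair:
  fixes d1 d2 p1 p2 :: real
  shows "\<bar>d1 * p1 + d2 * p2\<bar> \<le> sqrt (d1^2 + d2^2) * sqrt (p1^2 + p2^2)"
  using Cauchy_Schwarz_ineq2[of "(d1, d2)" "(p1, p2)"] by (simp add: norm_Pair)

lemma cos_le_cos_of_abs_le: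
  fixes e \<delta> :: real
  assumes "\<bar>e\<bar> \<le> \<delta>" "\<delta> \<le> pi"
  shows "cos \<delta> \<le> cos e"
  using cos_monotone_0_pi_le[of "\<bar>e\<bar>" \<delta>] assms by simp

lemma mult_sqrt_sum_squares_le:
  fixes c c1 c2 s1 s2 :: real
  assumes "0 \<le> c" "c \<le> c1" "c \<le> c2"
  shows "c * sqrt (s1^2 + s2^2) \<le> sqrt ((s1 * c1)^2 + (s2 * c2)^2)"
proof -
  have "c^2 * (s1^2 + s2^2) \<le> (s1 * c1)^2 + (s2 * c2)^2"
    using power_mono[OF assms(2) assms(1), of 2] power_mono[OF assms(3) assms(1), of 2]
    by (simp add: power_mult_distrib distrib_left add_mono mult_right_mono mult.commute)
  then show ?thesis
    using assms(1) by (metis real_sqrt_abs real_sqrt_le_mono real_sqrt_mult abs_of_nonneg)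
qed

lemma exp_mult_sqrt_lyapunov_decreasing:
  fixes W W' :: "real \<Rightarrow> real" and a b s t :: real
  assumes "a > 0" and "0 \<le> s" "s \<le> t"
    and pos: "\<And>x. x \<in> {s..t} \<Longrightarrow> 0 < W x"
    and deriv: "\<And>x. x \<ge> 0 \<Longrightarrow> (W has_real_derivative W' x) (at x within {0..})"
    and ineq: "\<And>x. x \<ge> 0 \<Longrightarrow> W' x \<le> - 2 * a * W x - 2 * b * sqrt (W x)"
  shows "exp (a * t) * (sqrt (W t) + b / a) \<le> exp (a * s) * (sqrt (W s) + b / a)"
proof (rule DERIV_within_nonpos_imp_decreasing[OF \<open>s \<le> t\<close>, of "{0..}"])
  fix x assume x: "x \<in> {s..t}"
  with \<open>0 \<le> s\<close> have "x \<ge> 0" by simp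
  have sqrt_pos: "sqrt (W x) > 0"
    using pos[OF x] by simp
  have dV: "((\<lambda>s. sqrt (W s)) has_real_derivative inverse (sqrt (W x)) / 2 * W' x) (at x within {0..})"
    using DERIV_chain2[OF DERIV_real_sqrt[OF pos[OF x]] deriv] \<open>x \<ge> 0\<close> by simp
  have dE: "((\<lambda>s. exp (a * s)) has_real_derivative exp (a * x) * a) (at x within {0..})"
    by (auto intro!: derivative_eq_intros)
  from DERIV_mult[OF dE DERIV_add[OF dV DERIV_const]]
  show "((\<lambda>s. exp (a * s) * (sqrt (W s) + b / a)) has_real_derivative
      exp (a * x) * (W' x / (2 * sqrt (W x)) + a * sqrt (W x) + b)) (at x within {0..})"
    by (rule DERIV_cong) (use \<open>a > 0\<close> in \<open>simp add: field_simps\<close>)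
  have "w' / (2 * v) + a * v + b \<le> 0" if "v > 0" "w' \<le> - 2 * a * v^2 - 2 * b * v" for v w'
    using that by (simp add: field_simps power2_eq_square)
  moreover have "W' x \<le> - 2 * a * (sqrt (W x))^2 - 2 * b * sqrt (W x)"
    using ineq[OF \<open>x \<ge> 0\<close>] pos[OF x] by simp
  ultimately have "W' x / (2 * sqrt (W x)) + a * sqrt (W x) + b \<le> 0"
    using sqrt_pos by blast
  then show "exp (a * x) * (W' x / (2 * sqrt (W x)) + a * sqrt (W x) + b) \<le> 0"
    by (simp add: mult_nonneg_nonpos)
qed (use \<open>0 \<le> s\<close> in auto)

lemma lyapunov_finite_time_vanishing:
  fixes W W' :: "real \<Rightarrow> real" and a b t :: real
  assumes a: "a > 0" and b: "b > 0"
    and nonneg: "\<And>t. t \<ge> 0 \<Longrightarrow> 0 \<le> W t"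
    and deriv: "\<And>t. t \<ge> 0 \<Longrightarrow> (W has_real_derivative W' t) (at t within {0..})"
    and ineq: "\<And>t. t \<ge> 0 \<Longrightarrow> W' t \<le> - 2 * a * W t - 2 * b * sqrt (W t)"
    and t: "1 / a * ln (1 + a / b * sqrt (W 0)) \<le> t"
  shows "W t = 0"
proof -
  define T where "T = 1 / a * ln (1 + a / b * sqrt (W 0))"
  have "T \<ge> 0"
    using a b nonneg[of 0] by (simp add: T_def)
  have antimono: "W u \<le> W s" if "0 \<le> s" "s \<le> u" for s u
  proof (rule DERIV_within_nonpos_imp_decreasing[OF \<open>s \<le> u\<close>, of "{0..}"])
    fix x assume "x \<in> {s..u}"
    with that have "x \<ge> 0" by simp
    show "(W has_real_derivative W' x) (at x within {0..})"
      using deriv[OF \<open>x \<ge> 0\<close>] .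
    have "0 \<le> a * W x" "0 \<le> b * sqrt (W x)"
      using nonneg[OF \<open>x \<ge> 0\<close>] a b by simp_all
    with ineq[OF \<open>x \<ge> 0\<close>] show "W' x \<le> 0"
      by linarith
  qed (use that in auto)
  have "\<exists>s\<in>{0..T}. W s = 0"
  proof (rule ccontr)
    assume "\<not> ?thesis"
    then have pos: "0 < W s" if "s \<in> {0..T}" for s
      using nonneg that by force
    from exp_mult_sqrt_lyapunov_decreasing[OF a order_refl \<open>T \<ge> 0\<close> pos deriv ineq]
    have decreasing: "exp (a * T) * (sqrt (W T) + b / a) \<le> sqrt (W 0) + b / a"
      by simp
    have factor_pos: "0 < 1 + a / b * sqrt (W 0)"
      using a b nonneg[of 0] by (simp add: add_pos_nonneg)
    then have "exp (a * T) = 1 + a / b * sqrt (W 0)"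
      using a by (simp add: T_def)
    with decreasing have "(1 + a / b * sqrt (W 0)) * (sqrt (W T) + b / a) \<le> sqrt (W 0) + b / a"
      by simp
    moreover have "(1 + a / b * sqrt (W 0)) * (sqrt (W T) + b / a)
        = sqrt (W T) * (1 + a / b * sqrt (W 0)) + (sqrt (W 0) + b / a)"
      using a b by (simp add: field_simps)
    ultimately have "sqrt (W T) * (1 + a / b * sqrt (W 0)) \<le> 0"
      by linarith
    with factor_pos have "sqrt (W T) \<le> 0"
      by (simp add: mult_le_0_iff)
    with pos[of T] \<open>T \<ge> 0\<close> show False
      by simp
  qed
  then obtain s where "s \<in> {0..T}" "W s = 0"
    by blast
  with antimono[of s t] nonneg[of t] t \<open>T \<ge> 0\<close> show ?thesis
    by (simp add: T_def)
qed

lemma compensation_dominates_disturbance: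
  fixes f1 f2 d1 d2 p1 p2 L \<tau> :: real
  assumes dist: "sqrt (d1^2 + d2^2) \<le> L"
    and comp: "(p1, p2) \<noteq> (0, 0) \<longrightarrow> (f1 * p1 + f2 * p2) / sqrt (p1^2 + p2^2) + L + \<tau> \<le> 0"
  shows "(f1 - d1) * p1 + (f2 - d2) * p2 \<le> - \<tau> * sqrt (p1^2 + p2^2)"
proof (cases "(p1, p2) = (0, 0)")
  case False
  then have N: "sqrt (p1^2 + p2^2) > 0"
    by (simp add: sum_power2_gt_zero_iff)
  have "(f1 * p1 + f2 * p2) / sqrt (p1^2 + p2^2) \<le> - (L + \<tau>)"
    using comp False by linarith
  then have "f1 * p1 + f2 * p2 \<le> - (L + \<tau>) * sqrt (p1^2 + p2^2)"
    using N by (simp add: pos_divide_le_eq)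
  moreover have "- (d1 * p1 + d2 * p2) \<le> L * sqrt (p1^2 + p2^2)"
    using Cauchy_Schwarz_ineq_real_pair[of d1 p1 d2 p2] mult_right_mono[OF dist, of "sqrt (p1^2 + p2^2)"]
    by simp
  ultimately show ?thesis
    by (simp add: algebra_simps)
qed simp

lemma lookahead_lyapunov_derivative_bound:
  fixes e1 e2 f1 f2 d1 d2 k L \<tau> \<delta> :: real
  assumes e1: "\<bar>e1\<bar> \<le> \<delta>" and e2: "\<bar>e2\<bar> \<le> \<delta>" and "\<delta> < pi / 2"
    and "k \<ge> 0" "\<tau> \<ge> 0" and dist: "sqrt (d1^2 + d2^2) \<le> L"
    and comp: "(sin e1 * cos e1, sin e2 * cos e2) \<noteq> (0, 0) \<longrightarrow>
        (f1 * (sin e1 * cos e1) + f2 * (sin e2 * cos e2))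
          / sqrt ((sin e1)^2 * (cos e1)^2 + (sin e2)^2 * (cos e2)^2) + L + \<tau> \<le> 0"
  shows "2 * sin e1 * cos e1 * (- k * sin e1 + f1 - d1) + 2 * sin e2 * cos e2 * (- k * sin e2 + f2 - d2)
     \<le> - 2 * (k * cos \<delta>) * ((sin e1)^2 + (sin e2)^2) - 2 * (\<tau> * cos \<delta>) * sqrt ((sin e1)^2 + (sin e2)^2)"
proof -
  have "cos \<delta> \<ge> 0"
    using assms by (intro cos_ge_zero) auto
  have c1: "cos \<delta> \<le> cos e1" and c2: "cos \<delta> \<le> cos e2"
    using cos_le_cos_of_abs_le e1 e2 \<open>\<delta> < pi / 2\<close> by auto
  have "cos \<delta> * ((sin e1)^2 + (sin e2)^2) \<le> (sin e1)^2 * cos e1 + (sin e2)^2 * cos e2"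
    using mult_right_mono[OF c1, of "(sin e1)^2"] mult_right_mono[OF c2, of "(sin e2)^2"]
    by (simp add: algebra_simps)
  then have "k * cos \<delta> * ((sin e1)^2 + (sin e2)^2) \<le> k * ((sin e1)^2 * cos e1 + (sin e2)^2 * cos e2)"
    using mult_left_mono \<open>k \<ge> 0\<close> by (fastforce simp: mult.assoc)
  moreover have "(f1 - d1) * (sin e1 * cos e1) + (f2 - d2) * (sin e2 * cos e2)
      \<le> - \<tau> * sqrt ((sin e1 * cos e1)^2 + (sin e2 * cos e2)^2)"
    using compensation_dominates_disturbance[OF dist, of "sin e1 * cos e1" "sin e2 * cos e2" f1 f2 \<tau>] comp
    by (simp only: power_mult_distrib)
  moreover have "\<tau> * cos \<delta> * sqrt ((sin e1)^2 + (sin e2)^2) \<le> \<tau> * sqrt ((sin e1 * cos e1)^2 + (sin e2 * cos e2)^2)"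
    using mult_sqrt_sum_squares_le[OF \<open>cos \<delta> \<ge> 0\<close> c1 c2] \<open>\<tau> \<ge> 0\<close>
    by (simp add: mult_left_mono mult.assoc)
  ultimately show ?thesis
    by (simp add: algebra_simps power2_eq_square)
qed

lemma lookahead_closed_loop_DERIV:
  fixes C \<theta> :: "real \<Rightarrow> real"
  assumes "(C has_real_derivative c) (at t within S)"
    and "(\<theta> has_real_derivative u + d) (at t within S)"
    and "u = k * sin (C t - \<theta> t) + (c - f)"
  shows "((\<lambda>s. C s - \<theta> s) has_real_derivative - k * sin (C t - \<theta> t) + f - d) (at t within S)"
  using DERIV_diff[OF assms(1,2)] by (rule DERIV_cong) (simp add: assms(3))

lemma lookahead_finite_time_convergence:
  fixes e1 e2 f1 f2 d1 d2 :: "real \<Rightarrow> real" and k \<delta> \<tau> L :: real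
  assumes "k > 0" "0 < \<delta>" "\<delta> < pi / 2" "\<tau> > 0"
    and de1: "\<And>t. t \<ge> 0 \<Longrightarrow>
       (e1 has_real_derivative - k * sin (e1 t) + f1 t - d1 t) (at t within {0..})"
    and de2: "\<And>t. t \<ge> 0 \<Longrightarrow>
       (e2 has_real_derivative - k * sin (e2 t) + f2 t - d2 t) (at t within {0..})"
    and dist: "\<And>t. t \<ge> 0 \<Longrightarrow> sqrt ((d1 t)^2 + (d2 t)^2) \<le> L"
    and comp: "\<And>t. t \<ge> 0 \<Longrightarrow>
       (sin (e1 t) * cos (e1 t), sin (e2 t) * cos (e2 t)) \<noteq> (0, 0) \<longrightarrow>
       (f1 t * (sin (e1 t) * cos (e1 t)) + f2 t * (sin (e2 t) * cos (e2 t)))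
         / sqrt ((sin (e1 t))^2 * (cos (e1 t))^2 + (sin (e2 t))^2 * (cos (e2 t))^2) + L + \<tau> \<le> 0"
    and region1: "\<And>t. t \<ge> 0 \<Longrightarrow> \<bar>e1 t\<bar> \<le> \<delta>"
    and region2: "\<And>t. t \<ge> 0 \<Longrightarrow> \<bar>e2 t\<bar> \<le> \<delta>"
  shows "\<exists>T\<ge>0. T \<le> 1 / (k * cos \<delta>) * ln (1 + k / \<tau> * sqrt ((sin (e1 0))^2 + (sin (e2 0))^2))
     \<and> (\<forall>t\<ge>T. e1 t = 0 \<and> e2 t = 0)"
proof -
  define W where "W t = (sin (e1 t))^2 + (sin (e2 t))^2" for t
  define T where "T = 1 / (k * cos \<delta>) * ln (1 + k / \<tau> * sqrt (W 0))"
  have "cos \<delta> > 0"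
    using assms by (intro cos_gt_zero_pi) auto
  have dW: "(W has_real_derivative
      2 * sin (e1 t) * cos (e1 t) * (- k * sin (e1 t) + f1 t - d1 t)
      + 2 * sin (e2 t) * cos (e2 t) * (- k * sin (e2 t) + f2 t - d2 t)) (at t within {0..})"
    if "t \<ge> 0" for t
    unfolding W_def using de1[OF that] de2[OF that]
    by (auto intro!: derivative_eq_intros)
  have dW_bound: "2 * sin (e1 t) * cos (e1 t) * (- k * sin (e1 t) + f1 t - d1 t)
      + 2 * sin (e2 t) * cos (e2 t) * (- k * sin (e2 t) + f2 t - d2 t)
      \<le> - 2 * (k * cos \<delta>) * W t - 2 * (\<tau> * cos \<delta>) * sqrt (W t)"
    if "t \<ge> 0" for t
    unfolding W_def
    using lookahead_lyapunov_derivative_bound[OF region1[OF that] region2[OF that] \<open>\<delta> < pi / 2\<close>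
        _ _ dist[OF that] comp[OF that]] assms by simp
  have vanish: "W t = 0" if "T \<le> t" for t
  proof (rule lyapunov_finite_time_vanishing[OF _ _ _ dW])
    show "0 < k * cos \<delta>" "0 < \<tau> * cos \<delta>"
      using assms \<open>cos \<delta> > 0\<close> by simp_all
    show "1 / (k * cos \<delta>) * ln (1 + k * cos \<delta> / (\<tau> * cos \<delta>) * sqrt (W 0)) \<le> t"
      using that \<open>cos \<delta> > 0\<close> by (simp add: T_def)
  qed (use dW_bound in \<open>simp_all add: W_def\<close>)
  have "T \<ge> 0"
    using assms \<open>cos \<delta> > 0\<close> by (simp add: T_def W_def)
  moreover have "e1 t = 0 \<and> e2 t = 0" if "T \<le> t" for t
  proof -
    have "sin (e1 t) = 0" "sin (e2 t) = 0"
      using vanish[OF that] by (simp_all add: W_def add_nonneg_eq_0_iff)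
    moreover have "\<bar>e1 t\<bar> < pi" "\<bar>e2 t\<bar> < pi"
      using region1[of t] region2[of t] \<open>T \<ge> 0\<close> that \<open>\<delta> < pi / 2\<close> pi_gt_zero by linarith+
    ultimately show ?thesis
      by (auto simp: sin_eq_0_pi abs_less_iff)
  qed
  ultimately show ?thesis
    unfolding T_def W_def by blast
qed

theorem theorem3:
  fixes Vg g kq \<delta> \<tau> Ld :: real
    and xp yp zp chi \<gamma> xc yc zc dchi dgam ayc azc fchi fgam dC1 dC2 :: "real \<Rightarrow> real"
  assumes Vg: "Vg > 0" and g: "g > 0"
    and kq: "kq > 0" and \<delta>: "0 < \<delta>" "\<delta> < pi / 2" and \<tau>: "\<tau> > 0"
    \<comment> \<open>kinematics on t \<ge> 0\<close>
    and cos_gamma: "\<And>t. t \<ge> 0 \<Longrightarrow> cos (\<gamma> t) \<noteq> 0"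
    and dxp: "\<And>t. t \<ge> 0 \<Longrightarrow> (xp has_real_derivative Vg * cos (\<gamma> t) * cos (chi t)) (at t within {0 ..})"
    and dyp: "\<And>t. t \<ge> 0 \<Longrightarrow> (yp has_real_derivative Vg * cos (\<gamma> t) * sin (chi t)) (at t within {0 ..})"
    and dzp: "\<And>t. t \<ge> 0 \<Longrightarrow> (zp has_real_derivative Vg * sin (\<gamma> t)) (at t within {0 ..})"
    and dchi: "\<And>t. t \<ge> 0 \<Longrightarrow>
       (chi has_real_derivative ayc t / (Vg * cos (\<gamma> t)) + dchi t) (at t within {0 ..})"
    and dgamma: "\<And>t. t \<ge> 0 \<Longrightarrow>
       (\<gamma> has_real_derivative (azc t - g * cos (\<gamma> t)) / Vg + dgam t) (at t within {0 ..})"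
    \<comment> \<open>bounded disturbances\<close>
    and dist: "\<And>t. t \<ge> 0 \<Longrightarrow> sqrt ((dchi t)^2 + (dgam t)^2) \<le> Ld"
    \<comment> \<open>time derivatives of the line-of-sight angles along the trajectory\<close>
    and dC1: "\<And>t. t \<ge> 0 \<Longrightarrow>
       ((\<lambda>s. los_lat (xc s) (yc s) (xp s) (yp s)) has_real_derivative dC1 t) (at t within {0 ..})"
    and dC2: "\<And>t. t \<ge> 0 \<Longrightarrow>
       ((\<lambda>s. los_lon (xc s) (yc s) (zc s) (xp s) (yp s) (zp s)) has_real_derivative dC2 t) (at t within {0 ..})"
    \<comment> \<open>modified guidance law with f_lat = dC1 - fchi, f_lon = dC2 - fgam\<close>
    and law_lat: "\<And>t. t \<ge> 0 \<Longrightarrow>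
       ayc t = (kq * sin (los_lat (xc t) (yc t) (xp t) (yp t) - chi t) + (dC1 t - fchi t))
               * Vg * cos (\<gamma> t)"
    and law_lon: "\<And>t. t \<ge> 0 \<Longrightarrow>
       azc t = (kq * sin (los_lon (xc t) (yc t) (zc t) (xp t) (yp t) (zp t) - \<gamma> t) + (dC2 t - fgam t))
               * Vg + g * cos (\<gamma> t)"
    \<comment> \<open>condition on the compensation terms\<close>
    and fcond: "\<And>t. t \<ge> 0 \<Longrightarrow>
       (let el = los_lat (xc t) (yc t) (xp t) (yp t) - chi t;
            eo = los_lon (xc t) (yc t) (zc t) (xp t) (yp t) (zp t) - \<gamma> t in
        \<bar>el\<bar> \<le> \<delta> \<longrightarrow> \<bar>eo\<bar> \<le> \<delta> \<longrightarrow>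
        (sin el * cos el, sin eo * cos eo) \<noteq> (0, 0) \<longrightarrow>
        (fchi t * (sin el * cos el) + fgam t * (sin eo * cos eo))
          / sqrt ((sin el)^2 * (cos el)^2 + (sin eo)^2 * (cos eo)^2) + Ld + \<tau> \<le> 0)"
    \<comment> \<open>the trajectory stays in the region |\<eta>| \<le> \<delta>\<close>
    and region_lat: "\<And>t. t \<ge> 0 \<Longrightarrow> \<bar>los_lat (xc t) (yc t) (xp t) (yp t) - chi t\<bar> \<le> \<delta>"
    and region_lon: "\<And>t. t \<ge> 0 \<Longrightarrow>
       \<bar>los_lon (xc t) (yc t) (zc t) (xp t) (yp t) (zp t) - \<gamma> t\<bar> \<le> \<delta>"
  shows "\<exists>T\<ge>0.
     T \<le> 1 / (kq * cos \<delta>) * ln (1 + kq / \<tau> *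
            sqrt ((sin (los_lon (xc 0) (yc 0) (zc 0) (xp 0) (yp 0) (zp 0) - \<gamma> 0))^2
                + (sin (los_lat (xc 0) (yc 0) (xp 0) (yp 0) - chi 0))^2))
     \<and> (\<forall>t\<ge>T. los_lat (xc t) (yc t) (xp t) (yp t) - chi t = 0
              \<and> los_lon (xc t) (yc t) (zc t) (xp t) (yp t) (zp t) - \<gamma> t = 0)"
proof -
  define el where "el = (\<lambda>t. los_lat (xc t) (yc t) (xp t) (yp t) - chi t)"
  define eo where "eo = (\<lambda>t. los_lon (xc t) (yc t) (zc t) (xp t) (yp t) (zp t) - \<gamma> t)"
  have el_deriv: "(el has_real_derivative - kq * sin (el t) + fchi t - dchi t) (at t within {0..})"
    if "t \<ge> 0" for t
    unfolding el_def
    by (rule lookahead_closed_loop_DERIV[OF dC1[OF that] dchi[OF that]])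
      (use law_lat[OF that] cos_gamma[OF that] Vg in simp)
  have eo_deriv: "(eo has_real_derivative - kq * sin (eo t) + fgam t - dgam t) (at t within {0..})"
    if "t \<ge> 0" for t
    unfolding eo_def
    by (rule lookahead_closed_loop_DERIV[OF dC2[OF that] dgamma[OF that]])
      (use law_lon[OF that] Vg in simp)
  have comp: "(sin (el t) * cos (el t), sin (eo t) * cos (eo t)) \<noteq> (0, 0) \<longrightarrow>
       (fchi t * (sin (el t) * cos (el t)) + fgam t * (sin (eo t) * cos (eo t)))
         / sqrt ((sin (el t))^2 * (cos (el t))^2 + (sin (eo t))^2 * (cos (eo t))^2) + Ld + \<tau> \<le> 0"
    if "t \<ge> 0" for t
    using fcond[OF that] region_lat[OF that] region_lon[OF that] unfolding el_def eo_def Let_def by blast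
  have "\<bar>el t\<bar> \<le> \<delta>" "\<bar>eo t\<bar> \<le> \<delta>" if "t \<ge> 0" for t
    using region_lat[OF that] region_lon[OF that] by (simp_all add: el_def eo_def)
  from lookahead_finite_time_convergence[OF kq \<delta> \<tau> el_deriv eo_deriv dist comp this]
  show ?thesis
    unfolding add.commute[of "(sin (el 0))^2"] unfolding el_def eo_def .
qed

end
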